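(* Let $S: x=x(u,v)$, $(u,v)\in\mathcal D$, be a strongly regular Weingarten surface parameterized by principal parameters. Then $(u,v)$ are geometric principal parameters if and only if $\sqrt{EG}\,(\nu_1-\nu_2)$ is constant.
   Context: For a surface $x=x(u,v)$ without umbilical points parameterized by principal parameters ($F=M=0$, with $E,F,G$, $L,M,N$ the coefficients of the first and second fundamental forms): $\nu_1=L/E$, $\nu_2=N/G$, $\gamma_1=-\frac{E_v}{2E\sqrt G}$, $\gamma_2=\frac{G_u}{2G\sqrt E}$. The surface is strongly regular if $(\nu_1-\nu_2)\gamma_1\gamma_2\neq0$, with the convention $\nu_1-\nu_2>0$. A strongly regular surface is Weingarten if there exist differentiable $f(\nu),g(\nu)$, $\nu\in\mathcal I\subseteq\mathbb R$, with $f-g>0$, $f'g'\neq0$, and a differentiable $\nu(u,v)\in\mathcal I$ with $\nu_u\nu_v\neq0$, such that $\nu_1=f(\nu)$, $\nu_2=g(\nu)$. With $\Phi$ an antiderivative of $f'/(f-g)$ and $\Psi$ an antiderivative of $g'/(g-f)$, put $\lambda=\ln\sqrt E+\Phi(\nu)$ and $\mu=\ln\sqrt G+\Psi(\nu)$. Principal parameters are geometric principal parameters if $\lambda$ and $\mu$ are constants. *)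

theory Defs
  imports "HOL-Analysis.Analysis"
begin

definition pu :: "(real \<times> real \<Rightarrow> 'a::real_normed_vector) \<Rightarrow> real \<times> real \<Rightarrow> 'a" where
  "pu f p = vector_derivative (\<lambda>s. f (s, snd p)) (at (fst p))"

definition pv :: "(real \<times> real \<Rightarrow> 'a::real_normed_vector) \<Rightarrow> real \<times> real \<Rightarrow> 'a" where
  "pv f p = vector_derivative (\<lambda>t. f (fst p, t)) (at (snd p))"

fun Ck :: "nat \<Rightarrow> (real \<times> real) set \<Rightarrow> (real \<times> real \<Rightarrow> 'a::real_normed_vector) \<Rightarrow> bool" where
  "Ck 0 D f = continuous_on D f"
| "Ck (Suc k) D f =
     (continuous_on D f \<and>
      (\<forall>p\<in>D. (\<lambda>s. f (s, snd p)) differentiable (at (fst p))) \<and>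
      (\<forall>p\<in>D. (\<lambda>t. f (fst p, t)) differentiable (at (snd p))) \<and>
      Ck k D (pu f) \<and> Ck k D (pv f))"

definition smooth_on_dom :: "(real \<times> real) set \<Rightarrow> (real \<times> real \<Rightarrow> 'a::real_normed_vector) \<Rightarrow> bool" where
  "smooth_on_dom D f \<longleftrightarrow> (\<forall>k. Ck k D f)"

type_synonym surf = "real \<times> real \<Rightarrow> real^3"

definition xu :: "surf \<Rightarrow> real \<times> real \<Rightarrow> real^3" where "xu x = pu x"
definition xv :: "surf \<Rightarrow> real \<times> real \<Rightarrow> real^3" where "xv x = pv x"

definition EE :: "surf \<Rightarrow> real \<times> real \<Rightarrow> real" where "EE x p = xu x p \<bullet> xu x p"
definition FF :: "surf \<Rightarrow> real \<times> real \<Rightarrow> real" where "FF x p = xu x p \<bullet> xv x p"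
definition GG :: "surf \<Rightarrow> real \<times> real \<Rightarrow> real" where "GG x p = xv x p \<bullet> xv x p"

definition unit_normal :: "surf \<Rightarrow> real \<times> real \<Rightarrow> real^3" where
  "unit_normal x p = scaleR (1 / norm (cross3 (xu x p) (xv x p))) (cross3 (xu x p) (xv x p))"
definition LL :: "surf \<Rightarrow> real \<times> real \<Rightarrow> real" where "LL x p = pu (xu x) p \<bullet> unit_normal x p"
definition MM :: "surf \<Rightarrow> real \<times> real \<Rightarrow> real" where "MM x p = pv (xu x) p \<bullet> unit_normal x p"
definition NN :: "surf \<Rightarrow> real \<times> real \<Rightarrow> real" where "NN x p = pv (xv x) p \<bullet> unit_normal x p"

definition regular_surface :: "(real \<times> real) set \<Rightarrow> surf \<Rightarrow> bool" where
  "regular_surface D x \<longleftrightarrow> open D \<and> connected D \<and> D \<noteq> {} \<and> smooth_on_dom D x \<and>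
     (\<forall>p\<in>D. cross3 (xu x p) (xv x p) \<noteq> 0)"

definition principal_params :: "(real \<times> real) set \<Rightarrow> surf \<Rightarrow> bool" where
  "principal_params D x \<longleftrightarrow> (\<forall>p\<in>D. FF x p = 0 \<and> MM x p = 0)"

definition nu1 :: "surf \<Rightarrow> real \<times> real \<Rightarrow> real" where "nu1 x p = LL x p / EE x p"
definition nu2 :: "surf \<Rightarrow> real \<times> real \<Rightarrow> real" where "nu2 x p = NN x p / GG x p"
definition gamma1 :: "surf \<Rightarrow> real \<times> real \<Rightarrow> real" where
  "gamma1 x p = - pv (EE x) p / (2 * EE x p * sqrt (GG x p))"
definition gamma2 :: "surf \<Rightarrow> real \<times> real \<Rightarrow> real" where
  "gamma2 x p = pu (GG x) p / (2 * GG x p * sqrt (EE x p))"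

text \<open>Strongly regular, with the convention nu1 - nu2 > 0 (hence no umbilical points).\<close>
definition strongly_regular :: "(real \<times> real) set \<Rightarrow> surf \<Rightarrow> bool" where
  "strongly_regular D x \<longleftrightarrow>
     (\<forall>p\<in>D. (nu1 x p - nu2 x p) * gamma1 x p * gamma2 x p \<noteq> 0 \<and> nu1 x p - nu2 x p > 0)"

definition weingarten_data ::
  "(real \<times> real) set \<Rightarrow> surf \<Rightarrow> real set \<Rightarrow> (real \<Rightarrow> real) \<Rightarrow> (real \<Rightarrow> real) \<Rightarrow> (real \<times> real \<Rightarrow> real) \<Rightarrow> bool" where
  "weingarten_data D x I f g \<nu> \<longleftrightarrow>
     open I \<and> is_interval I \<and>
     (\<forall>t\<in>I. f differentiable (at t) \<and> g differentiable (at t) \<and>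
             f t - g t > 0 \<and> deriv f t * deriv g t \<noteq> 0) \<and>
     (\<forall>p\<in>D. \<nu> p \<in> I \<and> \<nu> differentiable (at p) \<and> pu \<nu> p * pv \<nu> p \<noteq> 0 \<and>
             nu1 x p = f (\<nu> p) \<and> nu2 x p = g (\<nu> p))"

definition geometric_principal_params ::
  "(real \<times> real) set \<Rightarrow> surf \<Rightarrow> (real \<times> real \<Rightarrow> real) \<Rightarrow> (real \<Rightarrow> real) \<Rightarrow> (real \<Rightarrow> real) \<Rightarrow> bool" where
  "geometric_principal_params D x \<nu> \<Phi> \<Psi> \<longleftrightarrow>
     (\<exists>c. \<forall>p\<in>D. ln (sqrt (EE x p)) + \<Phi> (\<nu> p) = c) \<and>
     (\<exists>c. \<forall>p\<in>D. ln (sqrt (GG x p)) + \<Psi> (\<nu> p) = c)"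

end

theory Submission
  imports Defs
begin

text \<open>Differentiating the Weingarten equations along the principal curves gives the Codazzi
  equations \<open>(\<nu>\<^sub>1)\<^sub>v E = (\<nu>\<^sub>2 - \<nu>\<^sub>1) E\<^sub>v / 2\<close> and \<open>(\<nu>\<^sub>2)\<^sub>u G = (\<nu>\<^sub>1 - \<nu>\<^sub>2) G\<^sub>u / 2\<close>.
  Since \<open>\<nu>\<^sub>1 = f(\<nu>)\<close>, the first says \<open>(ln \<surd>E)\<^sub>v = -(\<Phi>(\<nu>))\<^sub>v\<close>, i.e. \<open>\<lambda>\<^sub>v = 0\<close>; likewise \<open>\<mu>\<^sub>u = 0\<close>.
  Moreover \<open>\<Phi> + \<Psi> - ln (f - g)\<close> is constant, so \<open>\<lambda> + \<mu> = ln (\<surd>(EG) (\<nu>\<^sub>1 - \<nu>\<^sub>2)) + const\<close>.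
  A function of \<open>u\<close> alone plus a function of \<open>v\<close> alone is constant on a connected domain
  only if both summands are, which gives the equivalence.\<close>


section \<open>Partial derivatives\<close>

abbreviation has_pu :: "(real \<times> real \<Rightarrow> 'a::real_normed_vector) \<Rightarrow> 'a \<Rightarrow> real \<times> real \<Rightarrow> bool" where
  "has_pu f d p \<equiv> ((\<lambda>s. f (s, snd p)) has_vector_derivative d) (at (fst p))"

abbreviation has_pv :: "(real \<times> real \<Rightarrow> 'a::real_normed_vector) \<Rightarrow> 'a \<Rightarrow> real \<times> real \<Rightarrow> bool" where
  "has_pv f d p \<equiv> ((\<lambda>t. f (fst p, t)) has_vector_derivative d) (at (snd p))"

lemma has_pu_transform_on_open:
  assumes "has_pu f d p" "open D" "p \<in> D" "\<And>q. q \<in> D \<Longrightarrow> f q = g q"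
  shows "has_pu g d p"
proof -
  have "open ((\<lambda>s. (s, snd p)) -` D)"
    by (rule open_vimage[OF assms(2)]) (intro continuous_intros)
  then show ?thesis using assms by (auto intro: has_vector_derivative_transform_within_open)
qed

lemma has_pu_unique_on_open:
  assumes "open D" "p \<in> D" "\<And>q. q \<in> D \<Longrightarrow> f q = g q" "has_pu f d p" "has_pu g d' p"
  shows "d = d'"
  using has_pu_transform_on_open[OF assms(4,1,2,3)] assms(5) vector_derivative_unique_at by blast

lemma has_pv_transform_on_open:
  assumes "has_pv f d p" "open D" "p \<in> D" "\<And>q. q \<in> D \<Longrightarrow> f q = g q"
  shows "has_pv g d p"
proof -
  have "open ((\<lambda>t. (fst p, t)) -` D)"
    by (rule open_vimage[OF assms(2)]) (intro continuous_intros)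
  then show ?thesis using assms by (auto intro: has_vector_derivative_transform_within_open)
qed

lemma has_pv_unique_on_open:
  assumes "open D" "p \<in> D" "\<And>q. q \<in> D \<Longrightarrow> f q = g q" "has_pv f d p" "has_pv g d' p"
  shows "d = d'"
  using has_pv_transform_on_open[OF assms(4,1,2,3)] assms(5) vector_derivative_unique_at by blast

lemma differentiable_has_pu:
  assumes "f differentiable (at p)" shows "has_pu f (pu f p) p"
proof -
  have "(\<lambda>s. (s, snd p)) differentiable (at (fst p))" by (intro derivative_intros)
  then have "(f \<circ> (\<lambda>s. (s, snd p))) differentiable (at (fst p))"
    by (rule differentiable_chain_at) (simp add: assms)
  then show ?thesis by (simp add: pu_def o_def vector_derivative_works)
qed

lemma differentiable_has_pv:
  assumes "f differentiable (at p)" shows "has_pv f (pv f p) p"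
proof -
  have "(\<lambda>t. (fst p, t)) differentiable (at (snd p))" by (intro derivative_intros)
  then have "(f \<circ> (\<lambda>t. (fst p, t))) differentiable (at (snd p))"
    by (rule differentiable_chain_at) (simp add: assms)
  then show ?thesis by (simp add: pv_def o_def vector_derivative_works)
qed

lemma smooth_on_dom_pu: "smooth_on_dom D f \<Longrightarrow> smooth_on_dom D (pu f)"
  unfolding smooth_on_dom_def by (metis Ck.simps(2))

lemma smooth_on_dom_pv: "smooth_on_dom D f \<Longrightarrow> smooth_on_dom D (pv f)"
  unfolding smooth_on_dom_def by (metis Ck.simps(2))

lemma smooth_on_dom_continuous_on: "smooth_on_dom D f \<Longrightarrow> continuous_on D f"
  unfolding smooth_on_dom_def by (metis Ck.simps(1))

lemma smooth_on_dom_has_pu: "smooth_on_dom D f \<Longrightarrow> p \<in> D \<Longrightarrow> has_pu f (pu f p) p"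
  unfolding smooth_on_dom_def pu_def by (metis Ck.simps(2) vector_derivative_works)

lemma smooth_on_dom_has_pv: "smooth_on_dom D f \<Longrightarrow> p \<in> D \<Longrightarrow> has_pv f (pv f p) p"
  unfolding smooth_on_dom_def pv_def by (metis Ck.simps(2) vector_derivative_works)

section \<open>Symmetry of mixed partial derivatives\<close>

lemma increment_bound_segment:
  fixes g :: "real \<Rightarrow> 'a::real_normed_vector"
  assumes deriv: "\<And>t. t \<in> closed_segment a b \<Longrightarrow>
      (g has_vector_derivative g' t) (at t within closed_segment a b)"
    and near: "\<And>t. t \<in> closed_segment a b \<Longrightarrow> norm (g' t - c) \<le> e"
  shows "norm (g b - g a - (b - a) *\<^sub>R c) \<le> e * \<bar>b - a\<bar>"
proof -
  have "norm ((g b - b *\<^sub>R c) - (g a - a *\<^sub>R c)) \<le> e * norm (b - a)"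
  proof (rule differentiable_bound[where f = "\<lambda>t. g t - t *\<^sub>R c" and f' = "\<lambda>t h. h *\<^sub>R (g' t - c)"])
    fix t assume t: "t \<in> closed_segment a b"
    have "((\<lambda>t. t *\<^sub>R c) has_vector_derivative c) (at t within closed_segment a b)"
      by (auto intro!: derivative_eq_intros simp: has_vector_derivative_def)
    then have "((\<lambda>t. g t - t *\<^sub>R c) has_vector_derivative g' t - c) (at t within closed_segment a b)"
      by (intro has_vector_derivative_diff deriv t)
    then show "((\<lambda>t. g t - t *\<^sub>R c) has_derivative (\<lambda>h. h *\<^sub>R (g' t - c))) (at t within closed_segment a b)"
      by (simp add: has_vector_derivative_def)
    show "onorm (\<lambda>h. h *\<^sub>R (g' t - c)) \<le> e"
      using near[OF t] by (simp add: onorm_scaleR_left onorm_id)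
  qed auto
  then show ?thesis by (simp add: algebra_simps)
qed

lemma closed_segment_abs_diff_le: "(t::real) \<in> closed_segment a b \<Longrightarrow> \<bar>t - a\<bar> \<le> \<bar>b - a\<bar>"
  by (auto simp: closed_segment_eq_real_ivl split: if_splits)

lemma continuous_on_open_square_nbhd:
  fixes F :: "real \<times> real \<Rightarrow> 'a::real_normed_vector"
  assumes "open D" "(a, b) \<in> D" "continuous_on D F" "e > 0"
  obtains d where "d > 0" and "\<And>s t. \<bar>s - a\<bar> < d \<Longrightarrow> \<bar>t - b\<bar> < d \<Longrightarrow>
    (s, t) \<in> D \<and> norm (F (s, t) - F (a, b)) \<le> e"
proof -
  have "isCont F (a, b)"
    using assms(1-3) continuous_on_eq_continuous_at by blast
  then obtain r1 where "r1 > 0" and r1: "\<And>q. dist q (a, b) < r1 \<Longrightarrow> dist (F q) (F (a, b)) < e"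
    using assms(4) unfolding continuous_at_eps_delta by blast
  obtain r2 where "r2 > 0" "ball (a, b) r2 \<subseteq> D" using assms(1,2) openE by blast
  define d where "d = min r1 r2 / 2"
  show ?thesis
  proof (rule that)
    show "d > 0" using \<open>r1 > 0\<close> \<open>r2 > 0\<close> by (simp add: d_def)
    fix s t assume "\<bar>s - a\<bar> < d" "\<bar>t - b\<bar> < d"
    moreover have "dist (s, t) (a, b) \<le> \<bar>s - a\<bar> + \<bar>t - b\<bar>"
      using sqrt_sum_squares_le_sum_abs[of "s - a" "t - b"] by (simp add: dist_Pair_Pair dist_real_def)
    ultimately have "dist (s, t) (a, b) < r1" "dist (s, t) (a, b) < r2" by (auto simp: d_def)
    then have "(s, t) \<in> D" "dist (F (s, t)) (F (a, b)) < e"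
      using r1 \<open>ball (a, b) r2 \<subseteq> D\<close> by (auto simp: mem_ball dist_commute[of "(a, b)"])
    then show "(s, t) \<in> D \<and> norm (F (s, t) - F (a, b)) \<le> e"
      by (simp add: dist_norm)
  qed
qed

lemma double_difference_approx_pv_pu:
  fixes f :: "real \<times> real \<Rightarrow> 'a::real_normed_vector"
  assumes "open D" "(a, b) \<in> D" "e > 0"
    and hu: "\<And>q. q \<in> D \<Longrightarrow> has_pu f (pu f q) q"
    and huv: "\<And>q. q \<in> D \<Longrightarrow> has_pv (pu f) (pv (pu f) q) q"
    and cont: "continuous_on D (pv (pu f))"
  obtains d where "d > 0" and "\<And>h k. \<bar>h\<bar> < d \<Longrightarrow> \<bar>k\<bar> < d \<Longrightarrow>
     norm (f (a+h, b+k) - f (a+h, b) - f (a, b+k) + f (a, b) - (h * k) *\<^sub>R pv (pu f) (a, b))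
       \<le> e * \<bar>h\<bar> * \<bar>k\<bar>"
proof -
  define c where "c = pv (pu f) (a, b)"
  obtain d where "d > 0" and near: "\<And>s t. \<bar>s - a\<bar> < d \<Longrightarrow> \<bar>t - b\<bar> < d \<Longrightarrow>
      (s, t) \<in> D \<and> norm (pv (pu f) (s, t) - c) \<le> e"
    using continuous_on_open_square_nbhd[OF assms(1,2) cont assms(3)] unfolding c_def by blast
  show ?thesis
  proof (rule that[OF \<open>d > 0\<close>])
    fix h k :: real assume hk: "\<bar>h\<bar> < d" "\<bar>k\<bar> < d"
    have inner: "norm (pu f (s, b+k) - pu f (s, b) - k *\<^sub>R c) \<le> e * \<bar>k\<bar>" if s: "\<bar>s - a\<bar> < d" for s
    proof (rule increment_bound_segment[where a = b and b = "b + k", simplified])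
      fix t assume "t \<in> closed_segment b (b + k)"
      then have "\<bar>t - b\<bar> < d" using closed_segment_abs_diff_le[of t b "b + k"] hk by force
      then show "norm (pv (pu f) (s, t) - c) \<le> e"
        and "((\<lambda>t. pu f (s, t)) has_vector_derivative pv (pu f) (s, t)) (at t within closed_segment b (b + k))"
        using near[OF s] huv[of "(s, t)"] by (simp_all add: has_vector_derivative_at_within)
    qed
    have "norm ((f (a+h, b+k) - f (a+h, b)) - (f (a, b+k) - f (a, b)) - h *\<^sub>R (k *\<^sub>R c)) \<le> (e * \<bar>k\<bar>) * \<bar>h\<bar>"
    proof (rule increment_bound_segment[where a = a and b = "a + h", simplified])
      fix s assume "s \<in> closed_segment a (a + h)"
      then have s: "\<bar>s - a\<bar> < d" using closed_segment_abs_diff_le[of s a "a + h"] hk by force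
      then show "norm (pu f (s, b+k) - pu f (s, b) - k *\<^sub>R c) \<le> e * \<bar>k\<bar>" by (rule inner)
      have "(s, b+k) \<in> D" "(s, b) \<in> D" using near[OF s] hk \<open>d > 0\<close> by auto
      then show "((\<lambda>s. f (s, b+k) - f (s, b)) has_vector_derivative pu f (s, b+k) - pu f (s, b))
          (at s within closed_segment a (a + h))"
        using hu[of "(s, b+k)"] hu[of "(s, b)"]
        by (simp add: has_vector_derivative_diff has_vector_derivative_at_within)
    qed
    then show "norm (f (a+h, b+k) - f (a+h, b) - f (a, b+k) + f (a, b) - (h * k) *\<^sub>R pv (pu f) (a, b))
       \<le> e * \<bar>h\<bar> * \<bar>k\<bar>"
      by (simp add: c_def algebra_simps)
  qed
qed

lemma pu_flip: "pu (\<lambda>q. f (snd q, fst q)) q = pv f (snd q, fst q)"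
  unfolding pu_def pv_def by simp

lemma pv_flip: "pv (\<lambda>q. f (snd q, fst q)) q = pu f (snd q, fst q)"
  unfolding pu_def pv_def by simp

lemma double_difference_approx_pu_pv:
  fixes f :: "real \<times> real \<Rightarrow> 'a::real_normed_vector"
  assumes "open D" "(a, b) \<in> D" "e > 0"
    and hv: "\<And>q. q \<in> D \<Longrightarrow> has_pv f (pv f q) q"
    and hvu: "\<And>q. q \<in> D \<Longrightarrow> has_pu (pv f) (pu (pv f) q) q"
    and cont: "continuous_on D (pu (pv f))"
  obtains d where "d > 0" and "\<And>h k. \<bar>h\<bar> < d \<Longrightarrow> \<bar>k\<bar> < d \<Longrightarrow>
     norm (f (a+h, b+k) - f (a+h, b) - f (a, b+k) + f (a, b) - (h * k) *\<^sub>R pu (pv f) (a, b))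
       \<le> e * \<bar>h\<bar> * \<bar>k\<bar>"
proof -
  define g where "g q = f (snd q, fst q)" for q
  define D' where "D' = (\<lambda>q. (snd q, fst q)) -` D"
  have "open D'"
    unfolding D'_def by (rule open_vimage[OF assms(1)]) (intro continuous_intros)
  have pu_g: "pu g q = pv f (snd q, fst q)" for q
    unfolding g_def by (rule pu_flip)
  have pv_pu_g: "pv (pu g) q = pu (pv f) (snd q, fst q)" for q
    unfolding pu_g[abs_def] by (rule pv_flip)
  have "continuous_on D' (pu (pv f) \<circ> (\<lambda>q. (snd q, fst q)))"
    by (rule continuous_on_compose) (auto intro!: continuous_intros cont[THEN continuous_on_subset] simp: D'_def)
  then have "continuous_on D' (pv (pu g))"
    by (simp add: o_def pv_pu_g)
  moreover have "has_pu g (pu g q) q" if "q \<in> D'" for q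
    using hv[of "(snd q, fst q)"] that by (simp add: pu_g g_def D'_def)
  moreover have "has_pv (pu g) (pv (pu g) q) q" if "q \<in> D'" for q
    using hvu[of "(snd q, fst q)"] that by (simp add: pu_g pv_pu_g D'_def)
  moreover have "(b, a) \<in> D'" using assms(2) by (simp add: D'_def)
  ultimately obtain d where "d > 0" and d: "\<And>h k. \<bar>h\<bar> < d \<Longrightarrow> \<bar>k\<bar> < d \<Longrightarrow>
      norm (g (b+k, a+h) - g (b+k, a) - g (b, a+h) + g (b, a) - (k * h) *\<^sub>R pv (pu g) (b, a))
        \<le> e * \<bar>k\<bar> * \<bar>h\<bar>"
    using double_difference_approx_pv_pu[OF \<open>open D'\<close> _ \<open>e > 0\<close>] by metis
  show ?thesis
    by (rule that[OF \<open>d > 0\<close>]) (use d in \<open>simp add: g_def pv_pu_g algebra_simps\<close>)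
qed

lemma mixed_partials_commute:
  fixes f :: "real \<times> real \<Rightarrow> 'a::real_normed_vector"
  assumes D: "open D" "p \<in> D"
    and hu: "\<And>q. q \<in> D \<Longrightarrow> has_pu f (pu f q) q"
    and hv: "\<And>q. q \<in> D \<Longrightarrow> has_pv f (pv f q) q"
    and huv: "\<And>q. q \<in> D \<Longrightarrow> has_pv (pu f) (pv (pu f) q) q"
    and hvu: "\<And>q. q \<in> D \<Longrightarrow> has_pu (pv f) (pu (pv f) q) q"
    and cuv: "continuous_on D (pv (pu f))"
    and cvu: "continuous_on D (pu (pv f))"
  shows "pv (pu f) p = pu (pv f) p"
proof (rule ccontr)
  assume ne: "pv (pu f) p \<noteq> pu (pv f) p"
  obtain a b where p: "p = (a, b)" by (cases p)
  define e where "e = norm (pv (pu f) p - pu (pv f) p) / 4"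
  have "e > 0" using ne by (simp add: e_def)
  obtain d1 where "d1 > 0" and d1: "\<And>h k. \<bar>h\<bar> < d1 \<Longrightarrow> \<bar>k\<bar> < d1 \<Longrightarrow>
      norm (f (a+h, b+k) - f (a+h, b) - f (a, b+k) + f (a, b) - (h * k) *\<^sub>R pv (pu f) (a, b))
        \<le> e * \<bar>h\<bar> * \<bar>k\<bar>"
    using double_difference_approx_pv_pu[OF D(1) D(2)[unfolded p] \<open>e > 0\<close> hu huv cuv] by blast
  obtain d2 where "d2 > 0" and d2: "\<And>h k. \<bar>h\<bar> < d2 \<Longrightarrow> \<bar>k\<bar> < d2 \<Longrightarrow>
      norm (f (a+h, b+k) - f (a+h, b) - f (a, b+k) + f (a, b) - (h * k) *\<^sub>R pu (pv f) (a, b))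
        \<le> e * \<bar>h\<bar> * \<bar>k\<bar>"
    using double_difference_approx_pu_pv[OF D(1) D(2)[unfolded p] \<open>e > 0\<close> hv hvu cvu] by blast
  define h where "h = min d1 d2 / 2"
  have h: "h > 0" "h < d1" "h < d2" using \<open>d1 > 0\<close> \<open>d2 > 0\<close> by (auto simp: h_def)
  define \<Delta> where "\<Delta> = f (a+h, b+h) - f (a+h, b) - f (a, b+h) + f (a, b)"
  have A: "norm (\<Delta> - (h * h) *\<^sub>R pv (pu f) p) \<le> e * h * h"
    using d1[of h h] h by (simp add: \<Delta>_def p)
  have B: "norm (\<Delta> - (h * h) *\<^sub>R pu (pv f) p) \<le> e * h * h"
    using d2[of h h] h by (simp add: \<Delta>_def p)
  have "h * h * norm (pv (pu f) p - pu (pv f) p)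
      = norm ((\<Delta> - (h * h) *\<^sub>R pu (pv f) p) - (\<Delta> - (h * h) *\<^sub>R pv (pu f) p))"
    by (simp add: algebra_simps flip: scaleR_diff_right)
  also have "\<dots> \<le> h * h * (2 * e)"
    using norm_triangle_ineq4[of "\<Delta> - (h * h) *\<^sub>R pu (pv f) p" "\<Delta> - (h * h) *\<^sub>R pv (pu f) p"] A B
    by (simp add: algebra_simps)
  finally have "norm (pv (pu f) p - pu (pv f) p) \<le> 2 * e"
    using h(1) by (simp add: mult_le_cancel_left_pos)
  then show False using \<open>e > 0\<close> by (simp add: e_def)
qed

lemma smooth_on_dom_mixed_partials_commute:
  "smooth_on_dom D f \<Longrightarrow> open D \<Longrightarrow> p \<in> D \<Longrightarrow> pv (pu f) p = pu (pv f) p"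
  by (rule mixed_partials_commute)
     (auto intro: smooth_on_dom_has_pu smooth_on_dom_has_pv smooth_on_dom_continuous_on
       smooth_on_dom_pu smooth_on_dom_pv)

section \<open>Functions with vanishing partial derivatives\<close>

lemma vector_derivative_zero_constant:
  fixes g :: "real \<Rightarrow> 'a::real_normed_vector"
  assumes "convex S" "\<And>t. t \<in> S \<Longrightarrow> (g has_vector_derivative 0) (at t)"
  shows "\<exists>c. \<forall>t\<in>S. g t = c"
  using assms by (intro has_derivative_zero_constant)
    (auto simp: has_vector_derivative_def intro: has_derivative_at_withinI)

lemma constant_if_zero_partials:
  fixes h :: "real \<times> real \<Rightarrow> 'a::real_normed_vector"
  assumes "open D" "connected D"
    and hu: "\<And>q. q \<in> D \<Longrightarrow> has_pu h 0 q" and hv: "\<And>q. q \<in> D \<Longrightarrow> has_pv h 0 q"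
  shows "\<exists>c. \<forall>q\<in>D. h q = c"
proof -
  have "h constant_on D"
  proof (rule locally_constant_imp_constant[OF assms(2)])
    fix p assume "p \<in> D"
    then obtain A B where "open A" "open B" "p \<in> A \<times> B" "A \<times> B \<subseteq> D"
      using assms(1) open_prod_elim by metis
    obtain a b where p: "p = (a, b)" by (cases p)
    obtain r1 r2 where "r1 > 0" "ball a r1 \<subseteq> A" "r2 > 0" "ball b r2 \<subseteq> B"
      using \<open>open A\<close> \<open>open B\<close> \<open>p \<in> A \<times> B\<close> openE by (metis SigmaE2 p)
    define T where "T = ball a r1 \<times> ball b r2"
    have "T \<subseteq> D" using \<open>ball a r1 \<subseteq> A\<close> \<open>ball b r2 \<subseteq> B\<close> \<open>A \<times> B \<subseteq> D\<close> by (auto simp: T_def)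
    have "h y = h p" if "y \<in> T" for y
    proof -
      obtain y1 y2 where y: "y = (y1, y2)" by (cases y)
      have "y1 \<in> ball a r1" "y2 \<in> ball b r2" using that by (auto simp: T_def y)
      have "\<exists>c. \<forall>s\<in>ball a r1. h (s, b) = c"
      proof (rule vector_derivative_zero_constant[OF convex_ball])
        fix s assume "s \<in> ball a r1"
        then have "(s, b) \<in> D" using \<open>r2 > 0\<close> \<open>T \<subseteq> D\<close> by (auto simp: T_def)
        then show "((\<lambda>s. h (s, b)) has_vector_derivative 0) (at s)" using hu by fastforce
      qed
      then have "h (y1, b) = h (a, b)" using \<open>y1 \<in> ball a r1\<close> \<open>r1 > 0\<close> by fastforce
      have "\<exists>c. \<forall>t\<in>ball b r2. h (y1, t) = c"
      proof (rule vector_derivative_zero_constant[OF convex_ball])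
        fix t assume "t \<in> ball b r2"
        then have "(y1, t) \<in> D" using \<open>y1 \<in> ball a r1\<close> \<open>T \<subseteq> D\<close> by (auto simp: T_def)
        then show "((\<lambda>t. h (y1, t)) has_vector_derivative 0) (at t)" using hv by fastforce
      qed
      then have "h (y1, y2) = h (y1, b)" using \<open>y2 \<in> ball b r2\<close> \<open>r2 > 0\<close> by fastforce
      with \<open>h (y1, b) = h (a, b)\<close> show ?thesis by (simp add: p y)
    qed
    moreover have "openin (top_of_set D) T" using \<open>T \<subseteq> D\<close> by (simp add: T_def open_subset open_Times)
    moreover have "p \<in> T" using \<open>r1 > 0\<close> \<open>r2 > 0\<close> by (simp add: T_def p)
    ultimately show "\<exists>T. openin (top_of_set D) T \<and> p \<in> T \<and> (\<forall>y\<in>T. h y = h p)" by blast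
  qed
  then show ?thesis by (auto simp: constant_on_def)
qed

lemma constant_pair_iff_constant_sum:
  fixes lam mu :: "real \<times> real \<Rightarrow> 'a::real_normed_vector"
  assumes D: "open D" "connected D"
    and lam_v: "\<And>q. q \<in> D \<Longrightarrow> has_pv lam 0 q"
    and mu_u: "\<And>q. q \<in> D \<Longrightarrow> has_pu mu 0 q"
  shows "(\<exists>c. \<forall>q\<in>D. lam q = c) \<and> (\<exists>c. \<forall>q\<in>D. mu q = c) \<longleftrightarrow> (\<exists>c. \<forall>q\<in>D. lam q + mu q = c)"
proof
  assume "\<exists>c. \<forall>q\<in>D. lam q + mu q = c"
  then obtain c where c: "\<And>q. q \<in> D \<Longrightarrow> lam q + mu q = c" by blast
  have lam_u: "has_pu lam 0 q" if "q \<in> D" for q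
  proof (rule has_pu_transform_on_open[OF _ D(1) that])
    show "has_pu (\<lambda>q. c - mu q) 0 q"
      using has_vector_derivative_diff[OF has_vector_derivative_const mu_u[OF that]] by simp
  qed (use c in \<open>simp add: algebra_simps\<close>)
  have mu_v: "has_pv mu 0 q" if "q \<in> D" for q
  proof (rule has_pv_transform_on_open[OF _ D(1) that])
    show "has_pv (\<lambda>q. c - lam q) 0 q"
      using has_vector_derivative_diff[OF has_vector_derivative_const lam_v[OF that]] by simp
  qed (use c in \<open>simp add: algebra_simps\<close>)
  show "(\<exists>c. \<forall>q\<in>D. lam q = c) \<and> (\<exists>c. \<forall>q\<in>D. mu q = c)"
    using constant_if_zero_partials[OF D lam_u lam_v] constant_if_zero_partials[OF D mu_u mu_v] by blast
qed auto

lemma has_vector_derivative_inner: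
  fixes f g :: "real \<Rightarrow> 'a::real_inner"
  assumes "(f has_vector_derivative f') (at t)" "(g has_vector_derivative g') (at t)"
  shows "((\<lambda>t. f t \<bullet> g t) has_vector_derivative (f t \<bullet> g' + f' \<bullet> g t)) (at t)"
  using bounded_bilinear.has_vector_derivative[OF bounded_bilinear_inner assms] .

lemma has_vector_derivative_cross3:
  fixes f g :: "real \<Rightarrow> real^3"
  assumes "(f has_vector_derivative f') (at t)" "(g has_vector_derivative g') (at t)"
  shows "((\<lambda>t. cross3 (f t) (g t)) has_vector_derivative (cross3 (f t) g' + cross3 f' (g t))) (at t)"
  using bilinear_cross bilinear_conv_bounded_bilinear
    bounded_bilinear.has_vector_derivative[OF _ assms] by blast

lemma differentiable_normalized:
  fixes n :: "real \<Rightarrow> 'a::real_inner"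
  assumes "n differentiable (at t)" "n t \<noteq> 0"
  shows "(\<lambda>t. (1 / norm (n t)) *\<^sub>R n t) differentiable (at t)"
proof -
  have "(norm \<circ> n) differentiable (at t)"
    by (rule differentiable_chain_at[OF assms(1)]) (simp add: assms(2))
  then have "(\<lambda>t. 1 / norm (n t)) differentiable (at t)"
    using assms(2) by (intro differentiable_divide) (auto simp: o_def)
  then show ?thesis using assms(1) by (intro differentiable_scaleR)
qed

lemma orthogonal_frame_expansion:
  fixes a b w :: "real^3"
  assumes "a \<bullet> b = 0" "cross3 a b \<noteq> 0" "w \<bullet> cross3 a b = 0"
  shows "w = ((w \<bullet> a) / (a \<bullet> a)) *\<^sub>R a + ((w \<bullet> b) / (b \<bullet> b)) *\<^sub>R b"
proof -
  have "a \<bullet> a \<noteq> 0" "b \<bullet> b \<noteq> 0" using assms(2) by auto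
  define r where "r = w - (((w \<bullet> a) / (a \<bullet> a)) *\<^sub>R a + ((w \<bullet> b) / (b \<bullet> b)) *\<^sub>R b)"
  have "a \<bullet> r = 0" "b \<bullet> r = 0" "cross3 a b \<bullet> r = 0"
    using \<open>a \<bullet> a \<noteq> 0\<close> \<open>b \<bullet> b \<noteq> 0\<close> assms(1,3) unfolding r_def
    by (simp_all add: inner_diff_right inner_add_right inner_commute dot_cross_self)
  moreover have "cross3 (cross3 a b) r = (a \<bullet> r) *\<^sub>R b - (b \<bullet> r) *\<^sub>R a"
    by (simp add: cross3_simps forall_3)
  ultimately have "r = 0" using assms(2) norm_and_cross_eq_0[of "cross3 a b" r] by simp
  then show ?thesis unfolding r_def by simp
qed

lemma has_pu_inner_const:
  fixes a b :: "real \<times> real \<Rightarrow> 'a::real_inner"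
  assumes "open D" "p \<in> D" "\<And>q. q \<in> D \<Longrightarrow> a q \<bullet> b q = c" "has_pu a a' p" "has_pu b b' p"
  shows "a p \<bullet> b' + a' \<bullet> b p = 0"
  using has_pu_unique_on_open[OF assms(1-3) has_vector_derivative_inner[OF assms(4,5)]
      has_vector_derivative_const] by simp

lemma has_pv_inner_const:
  fixes a b :: "real \<times> real \<Rightarrow> 'a::real_inner"
  assumes "open D" "p \<in> D" "\<And>q. q \<in> D \<Longrightarrow> a q \<bullet> b q = c" "has_pv a a' p" "has_pv b b' p"
  shows "a p \<bullet> b' + a' \<bullet> b p = 0"
  using has_pv_unique_on_open[OF assms(1-3) has_vector_derivative_inner[OF assms(4,5)]
      has_vector_derivative_const] by simp

section \<open>Surfaces in principal parameters\<close>

locale principal_surface =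
  fixes D :: "(real \<times> real) set" and x :: surf
  assumes regular: "regular_surface D x" and principal: "principal_params D x"
begin

lemma open_dom: "open D" and connected_dom: "connected D" and smooth: "smooth_on_dom D x"
  using regular by (simp_all add: regular_surface_def)

lemma cross_ne_0: "p \<in> D \<Longrightarrow> cross3 (pu x p) (pv x p) \<noteq> 0"
  using regular by (simp add: regular_surface_def xu_def xv_def)

lemma EE_pos: "p \<in> D \<Longrightarrow> EE x p > 0"
  using cross_ne_0[of p] by (auto simp: EE_def xu_def)

lemma GG_pos: "p \<in> D \<Longrightarrow> GG x p > 0"
  using cross_ne_0[of p] by (auto simp: GG_def xv_def)

lemma pu_inner_pv: "p \<in> D \<Longrightarrow> pu x p \<bullet> pv x p = 0"
  using principal by (simp add: principal_params_def FF_def xu_def xv_def)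

lemma pv_pu_inner_unit_normal: "p \<in> D \<Longrightarrow> pv (pu x) p \<bullet> unit_normal x p = 0"
  using principal by (simp add: principal_params_def MM_def xu_def xv_def)

lemma unit_normal_eq: "unit_normal x p = (1 / norm (cross3 (pu x p) (pv x p))) *\<^sub>R cross3 (pu x p) (pv x p)"
  by (simp add: unit_normal_def xu_def xv_def)

lemma unit_normal_inner_self: "p \<in> D \<Longrightarrow> unit_normal x p \<bullet> unit_normal x p = 1"
  using cross_ne_0[of p] by (simp add: unit_normal_eq power2_norm_eq_inner[symmetric] divide_simps)

lemma unit_normal_inner_pu: "unit_normal x p \<bullet> pu x p = 0"
  and unit_normal_inner_pv: "unit_normal x p \<bullet> pv x p = 0"
  by (simp_all add: unit_normal_eq dot_cross_self inner_commute)

lemma pu_pv_commute: "p \<in> D \<Longrightarrow> pu (pv x) p = pv (pu x) p"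
  using smooth_on_dom_mixed_partials_commute[OF smooth open_dom] by simp

lemma has_pu_unit_normal: assumes "p \<in> D"
  shows "has_pu (unit_normal x) (pu (unit_normal x) p) p"
proof -
  have "has_pu (\<lambda>q. cross3 (pu x q) (pv x q))
      (cross3 (pu x p) (pu (pv x) p) + cross3 (pu (pu x) p) (pv x p)) p"
    using has_vector_derivative_cross3[OF smooth_on_dom_has_pu[OF smooth_on_dom_pu[OF smooth] assms]
        smooth_on_dom_has_pu[OF smooth_on_dom_pv[OF smooth] assms]] by simp
  then have d: "(\<lambda>s. cross3 (pu x (s, snd p)) (pv x (s, snd p))) differentiable (at (fst p))"
    by (rule differentiableI_vector)
  have "(\<lambda>s. unit_normal x (s, snd p)) differentiable (at (fst p))"
    using differentiable_normalized[OF d] cross_ne_0[OF assms] by (simp add: unit_normal_eq)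
  then show ?thesis unfolding pu_def by (simp add: vector_derivative_works)
qed

lemma has_pv_unit_normal: assumes "p \<in> D"
  shows "has_pv (unit_normal x) (pv (unit_normal x) p) p"
proof -
  have "has_pv (\<lambda>q. cross3 (pu x q) (pv x q))
      (cross3 (pu x p) (pv (pv x) p) + cross3 (pv (pu x) p) (pv x p)) p"
    using has_vector_derivative_cross3[OF smooth_on_dom_has_pv[OF smooth_on_dom_pu[OF smooth] assms]
        smooth_on_dom_has_pv[OF smooth_on_dom_pv[OF smooth] assms]] by simp
  then have d: "(\<lambda>t. cross3 (pu x (fst p, t)) (pv x (fst p, t))) differentiable (at (snd p))"
    by (rule differentiableI_vector)
  have "(\<lambda>t. unit_normal x (fst p, t)) differentiable (at (snd p))"
    using differentiable_normalized[OF d] cross_ne_0[OF assms] by (simp add: unit_normal_eq)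
  then show ?thesis unfolding pv_def by (simp add: vector_derivative_works)
qed


lemma rodrigues_u: assumes p: "p \<in> D" shows "pu (unit_normal x) p = (- nu1 x p) *\<^sub>R pu x p"
proof -
  define Nu where "Nu = pu (unit_normal x) p"
  have hN: "has_pu (unit_normal x) Nu p" using has_pu_unit_normal[OF p] by (simp add: Nu_def)
  have "unit_normal x p \<bullet> Nu + Nu \<bullet> unit_normal x p = 0"
    by (rule has_pu_inner_const[OF open_dom p unit_normal_inner_self hN hN])
  then have "Nu \<bullet> cross3 (pu x p) (pv x p) = 0"
    using cross_ne_0[OF p] by (simp add: unit_normal_eq inner_commute)
  then have "Nu = ((Nu \<bullet> pu x p) / (pu x p \<bullet> pu x p)) *\<^sub>R pu x p + ((Nu \<bullet> pv x p) / (pv x p \<bullet> pv x p)) *\<^sub>R pv x p"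
    by (rule orthogonal_frame_expansion[OF pu_inner_pv[OF p] cross_ne_0[OF p]])
  moreover have "unit_normal x p \<bullet> pu (pu x) p + Nu \<bullet> pu x p = 0"
    by (rule has_pu_inner_const[OF open_dom p unit_normal_inner_pu hN
          smooth_on_dom_has_pu[OF smooth_on_dom_pu[OF smooth] p]])
  moreover have "unit_normal x p \<bullet> pu (pv x) p + Nu \<bullet> pv x p = 0"
    by (rule has_pu_inner_const[OF open_dom p unit_normal_inner_pv hN
          smooth_on_dom_has_pu[OF smooth_on_dom_pv[OF smooth] p]])
  ultimately show ?thesis
    using pu_pv_commute[OF p] pv_pu_inner_unit_normal[OF p] unfolding Nu_def
    by (simp add: nu1_def EE_def LL_def xu_def inner_commute add_eq_0_iff)
qed

lemma rodrigues_v: assumes p: "p \<in> D" shows "pv (unit_normal x) p = (- nu2 x p) *\<^sub>R pv x p"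
proof -
  define Nv where "Nv = pv (unit_normal x) p"
  have hN: "has_pv (unit_normal x) Nv p" using has_pv_unit_normal[OF p] by (simp add: Nv_def)
  have "unit_normal x p \<bullet> Nv + Nv \<bullet> unit_normal x p = 0"
    by (rule has_pv_inner_const[OF open_dom p unit_normal_inner_self hN hN])
  then have "Nv \<bullet> cross3 (pu x p) (pv x p) = 0"
    using cross_ne_0[OF p] by (simp add: unit_normal_eq inner_commute)
  then have "Nv = ((Nv \<bullet> pu x p) / (pu x p \<bullet> pu x p)) *\<^sub>R pu x p + ((Nv \<bullet> pv x p) / (pv x p \<bullet> pv x p)) *\<^sub>R pv x p"
    by (rule orthogonal_frame_expansion[OF pu_inner_pv[OF p] cross_ne_0[OF p]])
  moreover have "unit_normal x p \<bullet> pv (pu x) p + Nv \<bullet> pu x p = 0"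
    by (rule has_pv_inner_const[OF open_dom p unit_normal_inner_pu hN
          smooth_on_dom_has_pv[OF smooth_on_dom_pu[OF smooth] p]])
  moreover have "unit_normal x p \<bullet> pv (pv x) p + Nv \<bullet> pv x p = 0"
    by (rule has_pv_inner_const[OF open_dom p unit_normal_inner_pv hN
          smooth_on_dom_has_pv[OF smooth_on_dom_pv[OF smooth] p]])
  ultimately show ?thesis
    using pv_pu_inner_unit_normal[OF p] unfolding Nv_def
    by (simp add: nu2_def GG_def NN_def xv_def inner_commute add_eq_0_iff)
qed

lemma has_pv_EE: "p \<in> D \<Longrightarrow> has_pv (EE x) (2 * (pv (pu x) p \<bullet> pu x p)) p"
  using has_vector_derivative_inner[OF smooth_on_dom_has_pv[OF smooth_on_dom_pu[OF smooth]]
      smooth_on_dom_has_pv[OF smooth_on_dom_pu[OF smooth]]]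
  by (simp add: EE_def[abs_def] xu_def inner_commute)

lemma has_pu_GG: "p \<in> D \<Longrightarrow> has_pu (GG x) (2 * (pu (pv x) p \<bullet> pv x p)) p"
  using has_vector_derivative_inner[OF smooth_on_dom_has_pu[OF smooth_on_dom_pv[OF smooth]]
      smooth_on_dom_has_pu[OF smooth_on_dom_pv[OF smooth]]]
  by (simp add: GG_def[abs_def] xv_def inner_commute)

lemma codazzi_v:
  assumes p: "p \<in> D" and d: "has_pv (nu1 x) d p"
  shows "d * EE x p = (nu2 x p - nu1 x p) * (pv (pu x) p \<bullet> pu x p)"
proof -
  define A where "A = pv (pu x) p \<bullet> pu x p"
  define B where "B = pu (pu x) p \<bullet> pv x p"
  define C where "C = pv (pu (pu x)) p \<bullet> unit_normal x p"
  have L: "nu1 x q * EE x q = pu (pu x) q \<bullet> unit_normal x q" if "q \<in> D" for q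
    using EE_pos[OF that] by (simp add: nu1_def LL_def xu_def)
  have "nu1 x p * (2 * A) + d * EE x p = pu (pu x) p \<bullet> pv (unit_normal x) p + C"
    using has_pv_unique_on_open[OF open_dom p L has_vector_derivative_mult[OF d has_pv_EE[OF p]]
        has_vector_derivative_inner[OF smooth_on_dom_has_pv[OF smooth_on_dom_pu[OF smooth_on_dom_pu[OF smooth]] p]
          has_pv_unit_normal[OF p]]]
    by (simp add: A_def C_def)
  then have "nu1 x p * (2 * A) + d * EE x p = - nu2 x p * B + C"
    by (simp add: rodrigues_v[OF p] B_def)
  moreover have "pu x p \<bullet> pu (pv x) p + pu (pu x) p \<bullet> pv x p = 0"
    by (rule has_pu_inner_const[OF open_dom p pu_inner_pv smooth_on_dom_has_pu[OF smooth_on_dom_pu[OF smooth] p]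
          smooth_on_dom_has_pu[OF smooth_on_dom_pv[OF smooth] p]])
  then have "A + B = 0" using pu_pv_commute[OF p] by (simp add: A_def B_def inner_commute)
  moreover have "pv (pu x) p \<bullet> pu (unit_normal x) p + pu (pv (pu x)) p \<bullet> unit_normal x p = 0"
    by (rule has_pu_inner_const[OF open_dom p pv_pu_inner_unit_normal
          smooth_on_dom_has_pu[OF smooth_on_dom_pv[OF smooth_on_dom_pu[OF smooth]] p] has_pu_unit_normal[OF p]])
  then have "- nu1 x p * A + C = 0"
    using smooth_on_dom_mixed_partials_commute[OF smooth_on_dom_pu[OF smooth] open_dom p]
    by (simp add: rodrigues_u[OF p] A_def C_def)
  ultimately show ?thesis unfolding A_def[symmetric] by algebra
qed

lemma codazzi_u:
  assumes p: "p \<in> D" and d: "has_pu (nu2 x) d p"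
  shows "d * GG x p = (nu1 x p - nu2 x p) * (pu (pv x) p \<bullet> pv x p)"
proof -
  define A where "A = pu (pv x) p \<bullet> pv x p"
  define B where "B = pu x p \<bullet> pv (pv x) p"
  define C where "C = pu (pv (pv x)) p \<bullet> unit_normal x p"
  have N: "nu2 x q * GG x q = pv (pv x) q \<bullet> unit_normal x q" if "q \<in> D" for q
    using GG_pos[OF that] by (simp add: nu2_def NN_def xv_def)
  have "nu2 x p * (2 * A) + d * GG x p = pv (pv x) p \<bullet> pu (unit_normal x) p + C"
    using has_pu_unique_on_open[OF open_dom p N has_vector_derivative_mult[OF d has_pu_GG[OF p]]
        has_vector_derivative_inner[OF smooth_on_dom_has_pu[OF smooth_on_dom_pv[OF smooth_on_dom_pv[OF smooth]] p]
          has_pu_unit_normal[OF p]]]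
    by (simp add: A_def C_def)
  then have "nu2 x p * (2 * A) + d * GG x p = - nu1 x p * B + C"
    by (simp add: rodrigues_u[OF p] B_def inner_commute)
  moreover have "pu x p \<bullet> pv (pv x) p + pv (pu x) p \<bullet> pv x p = 0"
    by (rule has_pv_inner_const[OF open_dom p pu_inner_pv smooth_on_dom_has_pv[OF smooth_on_dom_pu[OF smooth] p]
          smooth_on_dom_has_pv[OF smooth_on_dom_pv[OF smooth] p]])
  then have "A + B = 0" using pu_pv_commute[OF p] by (simp add: A_def B_def inner_commute)
  moreover have "pu (pv x) q \<bullet> unit_normal x q = 0" if "q \<in> D" for q
    using pv_pu_inner_unit_normal[OF that] pu_pv_commute[OF that] by simp
  then have "pu (pv x) p \<bullet> pv (unit_normal x) p + pv (pu (pv x)) p \<bullet> unit_normal x p = 0"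
    by (rule has_pv_inner_const[OF open_dom p _
          smooth_on_dom_has_pv[OF smooth_on_dom_pu[OF smooth_on_dom_pv[OF smooth]] p] has_pv_unit_normal[OF p]])
  then have "- nu2 x p * A + C = 0"
    using smooth_on_dom_mixed_partials_commute[OF smooth_on_dom_pv[OF smooth] open_dom p]
    by (simp add: rodrigues_v[OF p] A_def C_def)
  ultimately show ?thesis unfolding A_def[symmetric] by algebra
qed

lemma has_pv_ln_sqrt_EE:
  assumes p: "p \<in> D" shows "has_pv (\<lambda>q. ln (sqrt (EE x q))) ((pv (pu x) p \<bullet> pu x p) / EE x p) p"
proof -
  have "((\<lambda>t. EE x (fst p, t)) has_real_derivative 2 * (pv (pu x) p \<bullet> pu x p)) (at (snd p))"
    using has_pv_EE[OF p] by (simp add: has_real_derivative_iff_has_vector_derivative)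
  then have "((\<lambda>t. ln (EE x (fst p, t)) / 2) has_real_derivative (pv (pu x) p \<bullet> pu x p) / EE x p) (at (snd p))"
    using EE_pos[OF p] by (auto intro!: derivative_eq_intros)
  then show ?thesis by (simp add: ln_sqrt EE_def has_real_derivative_iff_has_vector_derivative)
qed

lemma has_pu_ln_sqrt_GG:
  assumes p: "p \<in> D" shows "has_pu (\<lambda>q. ln (sqrt (GG x q))) ((pu (pv x) p \<bullet> pv x p) / GG x p) p"
proof -
  have "((\<lambda>s. GG x (s, snd p)) has_real_derivative 2 * (pu (pv x) p \<bullet> pv x p)) (at (fst p))"
    using has_pu_GG[OF p] by (simp add: has_real_derivative_iff_has_vector_derivative)
  then have "((\<lambda>s. ln (GG x (s, snd p)) / 2) has_real_derivative (pu (pv x) p \<bullet> pv x p) / GG x p) (at (fst p))"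
    using GG_pos[OF p] by (auto intro!: derivative_eq_intros)
  then show ?thesis by (simp add: ln_sqrt GG_def has_real_derivative_iff_has_vector_derivative)
qed

end


section \<open>Weingarten surfaces\<close>

lemma antiderivatives_sum_ln_gap:
  fixes f g \<Phi> \<Psi> :: "real \<Rightarrow> real"
  assumes "is_interval I"
    and f: "\<And>t. t \<in> I \<Longrightarrow> (f has_real_derivative f' t) (at t)"
    and g: "\<And>t. t \<in> I \<Longrightarrow> (g has_real_derivative g' t) (at t)"
    and gap: "\<And>t. t \<in> I \<Longrightarrow> f t > g t"
    and \<Phi>: "\<And>t. t \<in> I \<Longrightarrow> (\<Phi> has_real_derivative f' t / (f t - g t)) (at t)"
    and \<Psi>: "\<And>t. t \<in> I \<Longrightarrow> (\<Psi> has_real_derivative g' t / (g t - f t)) (at t)"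
  obtains K where "\<And>t. t \<in> I \<Longrightarrow> \<Phi> t + \<Psi> t = ln (f t - g t) + K"
proof -
  have "\<exists>K. \<forall>t\<in>I. \<Phi> t + \<Psi> t - ln (f t - g t) = K"
  proof (rule has_field_derivative_zero_constant)
    show "convex I" using assms(1) by (simp add: is_interval_convex)
    fix t assume t: "t \<in> I"
    have "((\<lambda>t. ln (f t - g t)) has_real_derivative 1 / (f t - g t) * (f' t - g' t)) (at t)"
      by (rule DERIV_chain2[OF DERIV_ln_divide DERIV_diff[OF f[OF t] g[OF t]]]) (use gap[OF t] in simp)
    then have "((\<lambda>t. \<Phi> t + \<Psi> t - ln (f t - g t)) has_real_derivative
        f' t / (f t - g t) + g' t / (g t - f t) - 1 / (f t - g t) * (f' t - g' t)) (at t)"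
      by (intro DERIV_diff DERIV_add \<Phi>[OF t] \<Psi>[OF t])
    also have "f' t / (f t - g t) + g' t / (g t - f t) - 1 / (f t - g t) * (f' t - g' t) = 0"
      using divide_minus_right[of "g' t" "f t - g t"] by (simp add: diff_divide_distrib)
    finally show "((\<lambda>t. \<Phi> t + \<Psi> t - ln (f t - g t)) has_real_derivative 0) (at t within I)"
      by (rule has_field_derivative_at_within)
  qed
  then show ?thesis using that by (metis diff_eq_eq add.commute)
qed

lemma constant_ln_plus_iff_constant:
  fixes S :: "'a \<Rightarrow> real"
  assumes "\<And>p. p \<in> D \<Longrightarrow> S p > 0"
  shows "(\<exists>c. \<forall>p\<in>D. ln (S p) + K = c) \<longleftrightarrow> (\<exists>c. \<forall>p\<in>D. S p = c)"
proof
  assume "\<exists>c. \<forall>p\<in>D. ln (S p) + K = c"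
  then obtain c where "\<And>p. p \<in> D \<Longrightarrow> ln (S p) = c - K" by (metis eq_diff_eq)
  then have "\<forall>p\<in>D. S p = exp (c - K)" using assms by (metis exp_ln)
  then show "\<exists>c. \<forall>p\<in>D. S p = c" ..
qed auto

locale weingarten_surface = principal_surface +
  fixes I :: "real set" and f g \<Phi> \<Psi> :: "real \<Rightarrow> real" and \<nu> :: "real \<times> real \<Rightarrow> real"
  assumes weingarten: "weingarten_data D x I f g \<nu>"
    and \<Phi>_deriv: "\<And>t. t \<in> I \<Longrightarrow> (\<Phi> has_real_derivative deriv f t / (f t - g t)) (at t)"
    and \<Psi>_deriv: "\<And>t. t \<in> I \<Longrightarrow> (\<Psi> has_real_derivative deriv g t / (g t - f t)) (at t)"
begin

lemma nu_in_I: "p \<in> D \<Longrightarrow> \<nu> p \<in> I"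
  and nu_differentiable: "p \<in> D \<Longrightarrow> \<nu> differentiable (at p)"
  and nu1_eq: "p \<in> D \<Longrightarrow> nu1 x p = f (\<nu> p)"
  and nu2_eq: "p \<in> D \<Longrightarrow> nu2 x p = g (\<nu> p)"
  and gap: "t \<in> I \<Longrightarrow> f t > g t"
  using weingarten by (auto simp: weingarten_data_def)

lemma f_deriv: "t \<in> I \<Longrightarrow> (f has_real_derivative deriv f t) (at t)"
  and g_deriv: "t \<in> I \<Longrightarrow> (g has_real_derivative deriv g t) (at t)"
  using weingarten DERIV_deriv_iff_real_differentiable by (auto simp: weingarten_data_def)

lemma has_pv_comp_nu:
  assumes "p \<in> D" "(h has_real_derivative h') (at (\<nu> p))"
  shows "has_pv (\<lambda>q. h (\<nu> q)) (h' * pv \<nu> p) p"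
proof -
  have "((\<lambda>t. \<nu> (fst p, t)) has_real_derivative pv \<nu> p) (at (snd p))"
    using differentiable_has_pv[OF nu_differentiable[OF assms(1)]]
    by (simp add: has_real_derivative_iff_has_vector_derivative)
  then show ?thesis
    using DERIV_chain2[of h h' "\<lambda>t. \<nu> (fst p, t)"] assms(2)
    by (simp add: has_real_derivative_iff_has_vector_derivative)
qed

lemma has_pu_comp_nu:
  assumes "p \<in> D" "(h has_real_derivative h') (at (\<nu> p))"
  shows "has_pu (\<lambda>q. h (\<nu> q)) (h' * pu \<nu> p) p"
proof -
  have "((\<lambda>s. \<nu> (s, snd p)) has_real_derivative pu \<nu> p) (at (fst p))"
    using differentiable_has_pu[OF nu_differentiable[OF assms(1)]]
    by (simp add: has_real_derivative_iff_has_vector_derivative)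
  then show ?thesis
    using DERIV_chain2[of h h' "\<lambda>s. \<nu> (s, snd p)"] assms(2)
    by (simp add: has_real_derivative_iff_has_vector_derivative)
qed

lemma lambda_pv_zero:
  assumes p: "p \<in> D" shows "has_pv (\<lambda>q. ln (sqrt (EE x q)) + \<Phi> (\<nu> q)) 0 p"
proof -
  define A where "A = pv (pu x) p \<bullet> pu x p"
  have "has_pv (nu1 x) (deriv f (\<nu> p) * pv \<nu> p) p"
    using has_pv_comp_nu[OF p f_deriv[OF nu_in_I[OF p]]] by (rule has_pv_transform_on_open)
      (use open_dom p nu1_eq in auto)
  then have "deriv f (\<nu> p) * pv \<nu> p * EE x p = (nu2 x p - nu1 x p) * A"
    unfolding A_def by (rule codazzi_v[OF p])
  then have "A / EE x p + deriv f (\<nu> p) / (f (\<nu> p) - g (\<nu> p)) * pv \<nu> p = 0"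
    using EE_pos[OF p] gap[OF nu_in_I[OF p]] nu1_eq[OF p] nu2_eq[OF p] by (simp add: field_simps)
  then show ?thesis
    using has_vector_derivative_add[OF has_pv_ln_sqrt_EE[OF p] has_pv_comp_nu[OF p \<Phi>_deriv[OF nu_in_I[OF p]]]]
    by (simp add: A_def)
qed

lemma mu_pu_zero:
  assumes p: "p \<in> D" shows "has_pu (\<lambda>q. ln (sqrt (GG x q)) + \<Psi> (\<nu> q)) 0 p"
proof -
  define A where "A = pu (pv x) p \<bullet> pv x p"
  have "has_pu (nu2 x) (deriv g (\<nu> p) * pu \<nu> p) p"
    using has_pu_comp_nu[OF p g_deriv[OF nu_in_I[OF p]]] by (rule has_pu_transform_on_open)
      (use open_dom p nu2_eq in auto)
  then have "deriv g (\<nu> p) * pu \<nu> p * GG x p = (nu1 x p - nu2 x p) * A"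
    unfolding A_def by (rule codazzi_u[OF p])
  then have "A / GG x p + deriv g (\<nu> p) / (g (\<nu> p) - f (\<nu> p)) * pu \<nu> p = 0"
    using GG_pos[OF p] gap[OF nu_in_I[OF p]] nu1_eq[OF p] nu2_eq[OF p] by (simp add: field_simps)
  then show ?thesis
    using has_vector_derivative_add[OF has_pu_ln_sqrt_GG[OF p] has_pu_comp_nu[OF p \<Psi>_deriv[OF nu_in_I[OF p]]]]
    by (simp add: A_def)
qed

lemma sqrt_EG_gap_pos: "p \<in> D \<Longrightarrow> sqrt (EE x p * GG x p) * (nu1 x p - nu2 x p) > 0"
  using EE_pos GG_pos gap nu_in_I nu1_eq nu2_eq by simp

lemma lambda_plus_mu_eq_ln:
  obtains K where "\<And>p. p \<in> D \<Longrightarrow> (ln (sqrt (EE x p)) + \<Phi> (\<nu> p)) + (ln (sqrt (GG x p)) + \<Psi> (\<nu> p))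
    = ln (sqrt (EE x p * GG x p) * (nu1 x p - nu2 x p)) + K"
proof -
  obtain K where K: "\<And>t. t \<in> I \<Longrightarrow> \<Phi> t + \<Psi> t = ln (f t - g t) + K"
    using antiderivatives_sum_ln_gap[OF _ f_deriv g_deriv gap \<Phi>_deriv \<Psi>_deriv] weingarten
    by (auto simp: weingarten_data_def)
  show ?thesis
  proof (rule that)
    fix p assume p: "p \<in> D"
    then show "(ln (sqrt (EE x p)) + \<Phi> (\<nu> p)) + (ln (sqrt (GG x p)) + \<Psi> (\<nu> p))
        = ln (sqrt (EE x p * GG x p) * (nu1 x p - nu2 x p)) + K"
      using K[OF nu_in_I[OF p]] EE_pos[OF p] GG_pos[OF p] gap[OF nu_in_I[OF p]] nu1_eq[OF p] nu2_eq[OF p]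
      by (simp add: real_sqrt_mult ln_mult)
  qed
qed

end

theorem proposition4p6:
  fixes D :: "(real \<times> real) set" and x :: surf
    and I :: "real set" and f g \<Phi> \<Psi> :: "real \<Rightarrow> real" and \<nu> :: "real \<times> real \<Rightarrow> real"
  assumes "regular_surface D x"
    and "principal_params D x"
    and "strongly_regular D x"
    and "weingarten_data D x I f g \<nu>"
    and "\<forall>t\<in>I. (\<Phi> has_real_derivative (deriv f t / (f t - g t))) (at t)"
    and "\<forall>t\<in>I. (\<Psi> has_real_derivative (deriv g t / (g t - f t))) (at t)"
  shows "geometric_principal_params D x \<nu> \<Phi> \<Psi> \<longleftrightarrow>
         (\<exists>c. \<forall>p\<in>D. sqrt (EE x p * GG x p) * (nu1 x p - nu2 x p) = c)"
proof -
  interpret weingarten_surface D x I f g \<Phi> \<Psi> \<nu>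
    using assms(1,2,4-6) by unfold_locales auto
  obtain K where K: "\<And>p. p \<in> D \<Longrightarrow> (ln (sqrt (EE x p)) + \<Phi> (\<nu> p)) + (ln (sqrt (GG x p)) + \<Psi> (\<nu> p))
      = ln (sqrt (EE x p * GG x p) * (nu1 x p - nu2 x p)) + K"
    using lambda_plus_mu_eq_ln by blast
  have "geometric_principal_params D x \<nu> \<Phi> \<Psi> \<longleftrightarrow>
      (\<exists>c. \<forall>p\<in>D. ln (sqrt (EE x p * GG x p) * (nu1 x p - nu2 x p)) + K = c)"
    unfolding geometric_principal_params_def
    using constant_pair_iff_constant_sum[OF open_dom connected_dom lambda_pv_zero mu_pu_zero] K
    by simp
  also have "\<dots> \<longleftrightarrow> (\<exists>c. \<forall>p\<in>D. sqrt (EE x p * GG x p) * (nu1 x p - nu2 x p) = c)"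
    by (rule constant_ln_plus_iff_constant[OF sqrt_EG_gap_pos])
  finally show ?thesis .
qed

end
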